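(* Let $N = n+1\ge 3$ and let $\Delta_N$ be the regular unimodular triangulation of $P_{C_N}$ described below. For each cell $T\in\Delta_N$, the associated directed acyclic subnetwork $(\{0,\dots,N-1\},\mathcal{E}(T))$ is primitive, i.e. $\mathcal{E}(T)$ contains exactly $n=N-1$ directed edges.
   Context: $C_N$ is the cycle graph on vertices $0,\dots,N-1$ with edges $\{0,1\},\dots,\{N-2,N-1\},\{N-1,0\}$; $\mathbf{e}_1,\dots,\mathbf{e}_n$ is the standard basis of $\mathbb{R}^n$ with $\mathbf{e}_0=\mathbf{e}_N=\mathbf{0}$; $P_{C_N}=\operatorname{conv}\{\mathbf{e}_i-\mathbf{e}_j\mid\{i,j\}\text{ an edge}\}$. If $N$ is even, let $\Lambda_N=\{\boldsymbol{\lambda}\in\{-1,1\}^N\mid\sum\lambda_i=0\}$, and for $\boldsymbol{\lambda}\in\Lambda_N$ let $\mathbf{v}_0=\mathbf{0}$, $\mathbf{v}_i=\lambda_i(\mathbf{e}_{i-1}-\mathbf{e}_i)$ ($1\le i\le N$), $V=\{\mathbf{v}_0,\dots,\mathbf{v}_N\}$; then $\Delta_N=\{\operatorname{conv}(V\setminus\{\mathbf{v}_i\})\mid\boldsymbol{\lambda}\in\Lambda_N,\ 1\le i\le N,\ \lambda_i=\lambda_1\}$. If $N$ is odd, let $\Lambda_{j,N}=\{\boldsymbol{\lambda}\mid\lambda_j=0,\ \lambda_i\in\{\pm1\}\ (i\ne j),\ \sum\lambda_i=0\}$ and $\Delta_N=\{\operatorname{conv}(\{\mathbf{0}\}\cup\{\lambda_i(\mathbf{e}_{i-1}-\mathbf{e}_i)\mid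 1\le i\le N,\ i\ne j\})\mid\boldsymbol{\lambda}\in\Lambda_{j,N},\ 1\le j\le N\}$. For a cell $T$, $\mathcal{E}(T)=\{(i,j)\mid\{i,j\}\text{ an edge of }C_N,\ \mathbf{e}_i-\mathbf{e}_j\in T\}$ (ordered pairs, i.e. directed edges), and the directed acyclic subnetwork associated with $T$ is the directed graph $(\{0,\dots,N-1\},\mathcal{E}(T))$; it is called primitive if it has exactly $n=N-1$ directed edges. *)

theory Defs
  imports "HOL-Analysis.Analysis" "HOL-Analysis.Finite_Function_Topology"
begin

text \<open>Vectors of R^n (n = N - 1) are represented as finitely supported functions
  finitely supported maps, supported on coordinates 1..n. The standard basis vector e_i for
  1 \<le> i \<le> n is the indicator of coordinate i; e_0 = e_N = 0.\<close>

type_synonym vec = "nat \<Rightarrow>\<^sub>0 real"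

definition ebas :: "nat \<Rightarrow> nat \<Rightarrow> vec" where
  "ebas N i = (if 1 \<le> i \<and> i \<le> N - 1 then Poly_Mapping.single i 1 else 0)"

definition cyc_edge :: "nat \<Rightarrow> nat \<Rightarrow> nat \<Rightarrow> bool" where
  "cyc_edge N i j \<longleftrightarrow> i < N \<and> j < N \<and> (j = Suc i mod N \<or> i = Suc j mod N)"

definition P_cyc :: "nat \<Rightarrow> vec set" where
  "P_cyc N = convex hull {ebas N i - ebas N j | i j. cyc_edge N i j}"

definition vvec :: "nat \<Rightarrow> (nat \<Rightarrow> int) \<Rightarrow> nat \<Rightarrow> vec" where
  "vvec N lam i = (if i = 0 then 0 else of_int (lam i) *\<^sub>R (ebas N (i - 1) - ebas N i))"

definition Lambda_even :: "nat \<Rightarrow> (nat \<Rightarrow> int) set" where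
  "Lambda_even N = {lam. (\<forall>i\<in>{1..N}. lam i \<in> {-1, 1}) \<and> (\<Sum>i=1..N. lam i) = 0}"

definition Lambda_odd :: "nat \<Rightarrow> nat \<Rightarrow> (nat \<Rightarrow> int) set" where
  "Lambda_odd j N = {lam. lam j = 0 \<and> (\<forall>i\<in>{1..N}-{j}. lam i \<in> {-1, 1}) \<and> (\<Sum>i=1..N. lam i) = 0}"

definition Delta :: "nat \<Rightarrow> vec set set" where
  "Delta N = (if even N then
      {convex hull (vvec N lam ` {0..N} - {vvec N lam i}) | lam i.
         lam \<in> Lambda_even N \<and> 1 \<le> i \<and> i \<le> N \<and> lam i = lam 1}
    else
      {convex hull ({0} \<union> {of_int (lam i) *\<^sub>R (ebas N (i - 1) - ebas N i) | i. 1 \<le> i \<and> i \<le> N \<and> i \<noteq> j})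
         | lam j. lam \<in> Lambda_odd j N \<and> 1 \<le> j \<and> j \<le> N})"

definition dir_edges :: "nat \<Rightarrow> vec set \<Rightarrow> (nat \<times> nat) set" where
  "dir_edges N T = {(i, j). cyc_edge N i j \<and> ebas N i - ebas N j \<in> T}"

definition primitive :: "nat \<Rightarrow> vec set \<Rightarrow> bool" where
  "primitive N T \<longleftrightarrow> card (dir_edges N T) = N - 1"

end

theory Submission
  imports Defs
begin

text \<open>Write \<open>w\<^sub>k = e\<^sub>k\<^sub>-\<^sub>1 - e\<^sub>k\<close> for \<open>1 \<le> k \<le> N\<close>. Every cell of \<open>\<Delta>\<^sub>N\<close> is
  \<open>conv(0, s\<^sub>k w\<^sub>k : k \<noteq> i)\<close> for some omitted index \<open>i\<close> and signs \<open>s\<^sub>k = \<plusminus>1\<close>, and the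
  difference vectors of the oriented edges of \<open>C\<^sub>N\<close> are exactly the vectors \<open>\<plusminus>w\<^sub>k\<close>.
  The only linear relation among \<open>w\<^sub>1, \<dots>, w\<^sub>N\<close> is \<open>w\<^sub>1 + \<dots> + w\<^sub>N = 0\<close>, so \<open>\<sigma> w\<^sub>m\<close> lies
  in the cell only if \<open>m \<noteq> i\<close> and \<open>\<sigma> = s\<^sub>m\<close>: for \<open>m = i\<close> the relation would force all
  \<open>N - 1\<close> barycentric coefficients to be \<open>1\<close>, exceeding the total mass \<open>1\<close> as \<open>N \<ge> 3\<close>.
  Hence \<open>E(T)\<close> contains exactly one orientation of each of the \<open>N - 1\<close> edges \<open>k \<noteq> i\<close>.\<close>

lemma lookup_scaleR_poly_mapping:
  "Poly_Mapping.lookup (r *\<^sub>R x) i = r *\<^sub>R Poly_Mapping.lookup (x :: 'a \<Rightarrow>\<^sub>0 'b::real_vector) i"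
proof -
  have "finite {i. r *\<^sub>R Poly_Mapping.lookup x i \<noteq> 0}"
    by (rule finite_subset[of _ "{i. Poly_Mapping.lookup x i \<noteq> 0}"]) auto
  then show ?thesis
    by (simp add: scaleR_poly_mapping_def)
qed

lemma convex_hull_insert_0_image_subset:
  fixes g :: "'i \<Rightarrow> 'a::real_vector"
  assumes "finite K"
  shows "convex hull (insert 0 (g ` K)) \<subseteq>
    {\<Sum>k\<in>K. c k *\<^sub>R g k | c. (\<forall>k\<in>K. 0 \<le> c k) \<and> sum c K \<le> 1}"
    (is "_ \<subseteq> ?S")
proof (rule hull_minimal)
  have "0 \<in> ?S"
    by (rule CollectI, rule exI[of _ "\<lambda>_. 0"]) simp
  moreover have "g j \<in> ?S" if "j \<in> K" for j
    by (rule CollectI, rule exI[of _ "\<lambda>k. if k = j then 1 else 0"])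
      (simp add: that assms if_distrib[of "\<lambda>c. c *\<^sub>R _"] cong: if_cong)
  ultimately show "insert 0 (g ` K) \<subseteq> ?S"
    by blast
  show "convex ?S"
    unfolding convex_def
  proof (intro ballI allI impI)
    fix x y and u v :: real
    assume "x \<in> ?S" "y \<in> ?S" and uv: "0 \<le> u" "0 \<le> v" "u + v = 1"
    then obtain c d where c: "\<forall>k\<in>K. 0 \<le> c k" "sum c K \<le> 1" "x = (\<Sum>k\<in>K. c k *\<^sub>R g k)"
      and d: "\<forall>k\<in>K. 0 \<le> d k" "sum d K \<le> 1" "y = (\<Sum>k\<in>K. d k *\<^sub>R g k)"
      by auto
    have "sum (\<lambda>k. u * c k + v * d k) K = u * sum c K + v * sum d K"
      by (simp add: sum.distrib sum_distrib_left)
    also have "\<dots> \<le> u + v"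
      using c d uv by (intro add_mono mult_left_le) auto
    finally have "sum (\<lambda>k. u * c k + v * d k) K \<le> 1"
      using uv by simp
    moreover have "u *\<^sub>R x + v *\<^sub>R y = (\<Sum>k\<in>K. (u * c k + v * d k) *\<^sub>R g k)"
      by (simp add: c d scaleR_sum_right sum.distrib scaleR_add_left)
    ultimately show "u *\<^sub>R x + v *\<^sub>R y \<in> ?S"
      using c d uv by (intro CollectI exI[of _ "\<lambda>k. u * c k + v * d k"]) auto
  qed
qed

lemma lookup_ebas:
  "Poly_Mapping.lookup (ebas N i) x = (if 1 \<le> i \<and> i \<le> N - 1 \<and> x = i then 1 else 0)"
  by (auto simp: ebas_def lookup_single)

lemma ebas_mod: "k \<le> N \<Longrightarrow> ebas N (k mod N) = ebas N k"
  by (cases "k = N") (auto simp: ebas_def)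

definition cycle_vec :: "nat \<Rightarrow> nat \<Rightarrow> vec" where
  "cycle_vec N k = ebas N (k - 1) - ebas N k"

lemma lookup_cycle_vec:
  assumes "1 \<le> x" "x \<le> N - 1" "1 \<le> k" "k \<le> N"
  shows "Poly_Mapping.lookup (cycle_vec N k) x = (if k = x + 1 then 1 else 0) - (if k = x then 1 else 0)"
  using assms by (auto simp: cycle_vec_def lookup_minus lookup_ebas)

lemma lookup_sum_cycle_vec:
  assumes "1 \<le> x" "x \<le> N - 1"
  shows "Poly_Mapping.lookup (\<Sum>k=1..N. a k *\<^sub>R cycle_vec N k) x = a (x + 1) - a x"
proof -
  have "Poly_Mapping.lookup (\<Sum>k=1..N. a k *\<^sub>R cycle_vec N k) x
      = (\<Sum>k=1..N. (if k = x + 1 then a k else 0) - (if k = x then a k else 0))"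
    using assms by (auto simp: lookup_sum lookup_scaleR_poly_mapping lookup_cycle_vec intro!: sum.cong)
  also have "\<dots> = a (x + 1) - a x"
    using assms by (auto simp: sum_subtractf)
  finally show ?thesis .
qed

lemma sum_cycle_vec_eq_0_imp_const:
  assumes "(\<Sum>k=1..N. a k *\<^sub>R cycle_vec N k) = 0" and "1 \<le> k" "k \<le> N"
  shows "a k = a 1"
  using assms(2,3)
proof (induction k)
  case (Suc k)
  show ?case
  proof (cases "k = 0")
    case False
    then have "a (k + 1) - a k = 0"
      using lookup_sum_cycle_vec[of k N a] assms(1) Suc.prems by simp
    with Suc False show ?thesis by simp
  qed simp
qed simp

text \<open>Every cell of \<open>Delta N\<close> has this form, with \<open>s\<close> the sign vector \<open>lam\<close> and \<open>i\<close> the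
  omitted index (\<open>j\<close> in the odd case).\<close>
definition signed_cell :: "nat \<Rightarrow> (nat \<Rightarrow> real) \<Rightarrow> nat \<Rightarrow> vec set" where
  "signed_cell N s i = convex hull (insert 0 ((\<lambda>k. s k *\<^sub>R cycle_vec N k) ` ({1..N} - {i})))"

lemma signed_cycle_vec_in_signed_cell_iff:
  assumes N: "N \<ge> 3" and i: "i \<in> {1..N}" and s: "\<forall>k\<in>{1..N} - {i}. s k \<in> {-1, 1}"
    and m: "m \<in> {1..N}" and \<sigma>: "\<sigma> \<in> {-1, 1}"
  shows "\<sigma> *\<^sub>R cycle_vec N m \<in> signed_cell N s i \<longleftrightarrow> m \<noteq> i \<and> s m = \<sigma>"
proof
  assume "m \<noteq> i \<and> s m = \<sigma>"
  with m show "\<sigma> *\<^sub>R cycle_vec N m \<in> signed_cell N s i"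
    unfolding signed_cell_def by (auto intro: hull_inc)
next
  define K where "K = {1..N} - {i}"
  assume "\<sigma> *\<^sub>R cycle_vec N m \<in> signed_cell N s i"
  moreover have "finite K"
    by (simp add: K_def)
  ultimately obtain c where c: "\<forall>k\<in>K. 0 \<le> c k" "sum c K \<le> 1"
    and comb: "\<sigma> *\<^sub>R cycle_vec N m = (\<Sum>k\<in>K. (c k * s k) *\<^sub>R cycle_vec N k)"
    using convex_hull_insert_0_image_subset[of K "\<lambda>k. s k *\<^sub>R cycle_vec N k"]
    unfolding signed_cell_def K_def by auto
  define a where "a k = (if k \<in> K then c k * s k else 0) - (if k = m then \<sigma> else 0)" for k
  have "(\<Sum>k=1..N. a k *\<^sub>R cycle_vec N k)
      = (\<Sum>k\<in>K. (c k * s k) *\<^sub>R cycle_vec N k) - \<sigma> *\<^sub>R cycle_vec N m"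
    using m by (simp add: a_def K_def scaleR_diff_left sum_subtractf if_distrib[of "\<lambda>c. c *\<^sub>R _"]
        sum.If_cases Diff_eq Compl_eq cong: if_cong)
  then have relation: "(\<Sum>k=1..N. a k *\<^sub>R cycle_vec N k) = 0"
    using comb by simp
  have "a k = a i" if "k \<in> {1..N}" for k
    using sum_cycle_vec_eq_0_imp_const[OF relation] that i by (metis atLeastAtMost_iff)
  then have a_const: "a k = - (if m = i then \<sigma> else 0)" if "k \<in> {1..N}" for k
    using that by (simp add: a_def K_def)
  show "m \<noteq> i \<and> s m = \<sigma>"
  proof (cases "m = i")
    case False
    then have "c m * s m = \<sigma>" "m \<in> K"
      using a_const[OF m] m by (auto simp: a_def K_def)
    moreover have "s m \<in> {-1, 1}" "0 \<le> c m"
      using s c \<open>m \<in> K\<close> by (auto simp: K_def)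
    ultimately show ?thesis
      using False \<sigma> by auto
  next
    case True
    have "c k = 1" if "k \<in> K" for k
    proof -
      have "c k * s k = - \<sigma>"
        using a_const[of k] that True by (auto simp: a_def K_def)
      moreover have "s k \<in> {-1, 1}" "0 \<le> c k"
        using s c that by (auto simp: K_def)
      ultimately show ?thesis
        using \<sigma> by auto
    qed
    then have "sum c K = N - 1"
      using i by (simp add: K_def)
    with c N show ?thesis
      by simp
  qed
qed

lemma mod_eq_if_in_1_N: "(k::nat) \<in> {1..N} \<Longrightarrow> k mod N = (if k = N then 0 else k)"
  by auto

definition signed_arc :: "nat \<Rightarrow> real \<Rightarrow> nat \<Rightarrow> nat \<times> nat" where
  "signed_arc N \<sigma> k = (if \<sigma> = 1 then (k - 1, k mod N) else (k mod N, k - 1))"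

lemma cyc_edge_iff_signed_arc:
  "cyc_edge N p q \<longleftrightarrow> (\<exists>k\<in>{1..N}. \<exists>\<sigma>\<in>{-1, 1}. signed_arc N \<sigma> k = (p, q))"
proof
  assume "cyc_edge N p q"
  then have "p < N" "q < N" "q = Suc p mod N \<or> p = Suc q mod N"
    by (auto simp: cyc_edge_def)
  then have "signed_arc N 1 (Suc p) = (p, q) \<or> signed_arc N (-1) (Suc q) = (p, q)"
    by (auto simp: signed_arc_def)
  then show "\<exists>k\<in>{1..N}. \<exists>\<sigma>\<in>{-1, 1}. signed_arc N \<sigma> k = (p, q)"
    using \<open>p < N\<close> \<open>q < N\<close> by force
next
  assume "\<exists>k\<in>{1..N}. \<exists>\<sigma>\<in>{-1, 1}. signed_arc N \<sigma> k = (p, q)"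
  then obtain k where "k \<in> {1..N}" "(k - 1, k mod N) = (p, q) \<or> (k - 1, k mod N) = (q, p)"
    by (auto simp: signed_arc_def split: if_splits)
  then show "cyc_edge N p q"
    by (auto simp: cyc_edge_def)
qed

lemma signed_arc_vec:
  assumes "k \<in> {1..N}" "\<sigma> \<in> {-1, 1}" "signed_arc N \<sigma> k = (p, q)"
  shows "ebas N p - ebas N q = \<sigma> *\<^sub>R cycle_vec N k"
  using assms ebas_mod[of k N] by (auto simp: signed_arc_def cycle_vec_def)

lemma signed_arc_eq_imp_eq:
  assumes "N \<ge> 3" "k \<in> {1..N}" "l \<in> {1..N}" "signed_arc N \<sigma> k = signed_arc N \<tau> l"
  shows "k = l"
  using assms mod_eq_if_in_1_N[of k N] mod_eq_if_in_1_N[of l N]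
  by (auto simp: signed_arc_def split: if_splits)

lemma dir_edges_signed_cell:
  assumes N: "N \<ge> 3" and i: "i \<in> {1..N}" and s: "\<forall>k\<in>{1..N} - {i}. s k \<in> {-1, 1}"
  shows "dir_edges N (signed_cell N s i) = (\<lambda>k. signed_arc N (s k) k) ` ({1..N} - {i})"
proof (intro equalityI subsetI)
  fix e
  assume "e \<in> dir_edges N (signed_cell N s i)"
  then obtain p q where e: "e = (p, q)" "cyc_edge N p q" "ebas N p - ebas N q \<in> signed_cell N s i"
    by (auto simp: dir_edges_def)
  then obtain k \<sigma> where k: "k \<in> {1..N}" "\<sigma> \<in> {-1, 1}" "signed_arc N \<sigma> k = (p, q)"
    unfolding cyc_edge_iff_signed_arc by blast
  then have "\<sigma> *\<^sub>R cycle_vec N k \<in> signed_cell N s i"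
    using e(3) signed_arc_vec[OF k] by simp
  then have "k \<noteq> i" "s k = \<sigma>"
    using signed_cycle_vec_in_signed_cell_iff[OF N i s k(1,2)] by auto
  with k e show "e \<in> (\<lambda>k. signed_arc N (s k) k) ` ({1..N} - {i})"
    by (intro image_eqI[of _ _ k]) auto
next
  fix e
  assume "e \<in> (\<lambda>k. signed_arc N (s k) k) ` ({1..N} - {i})"
  then obtain k where k: "k \<in> {1..N}" "k \<noteq> i" and arc: "signed_arc N (s k) k = e"
    by blast
  obtain p q where e: "e = (p, q)"
    by (cases e)
  have "s k \<in> {-1, 1}"
    using s k by blast
  then have "cyc_edge N p q" "ebas N p - ebas N q = s k *\<^sub>R cycle_vec N k"
    using k(1) arc e cyc_edge_iff_signed_arc signed_arc_vec by blast+
  moreover have "s k *\<^sub>R cycle_vec N k \<in> signed_cell N s i"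
    using signed_cycle_vec_in_signed_cell_iff[OF N i s k(1) \<open>s k \<in> {-1, 1}\<close>] k by simp
  ultimately show "e \<in> dir_edges N (signed_cell N s i)"
    using e by (simp add: dir_edges_def)
qed

lemma primitive_signed_cell:
  assumes "N \<ge> 3" "i \<in> {1..N}" "\<forall>k\<in>{1..N} - {i}. s k \<in> {-1, 1}"
  shows "primitive N (signed_cell N s i)"
proof -
  have "inj_on (\<lambda>k. signed_arc N (s k) k) ({1..N} - {i})"
    using signed_arc_eq_imp_eq[OF \<open>N \<ge> 3\<close>] by (intro inj_onI) blast
  then show ?thesis
    using assms by (simp add: primitive_def dir_edges_signed_cell card_image)
qed

lemma Delta_cell_eq_signed_cell:
  assumes N: "N \<ge> 3" and T: "T \<in> Delta N"
  obtains s i where "i \<in> {1..N}" "\<forall>k\<in>{1..N} - {i}. s k \<in> {-1, 1}" "T = signed_cell N s i"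
proof (cases "even N")
  case True
  with T obtain lam i where T: "T = convex hull (vvec N lam ` {0..N} - {vvec N lam i})"
    and lam: "lam \<in> Lambda_even N" and i: "i \<in> {1..N}"
    by (auto simp: Delta_def)
  define s where "s k = real_of_int (lam k)" for k
  let ?v = "\<lambda>k. s k *\<^sub>R cycle_vec N k"
  have s: "\<forall>k\<in>{1..N}. s k \<in> {-1, 1}"
    using lam by (auto simp: Lambda_even_def s_def)
  then have s': "\<forall>k\<in>{1..N} - {i}. s k \<in> {-1, 1}"
    by blast
  have vvec_0: "vvec N lam 0 = 0"
    by (simp add: vvec_def)
  have vvec_pos: "vvec N lam k = ?v k" if "k \<ge> 1" for k
    using that by (simp add: vvec_def s_def cycle_vec_def)
  \<comment> \<open>\<open>V - {v\<^sub>i}\<close> removes \<open>v\<^sub>i\<close> by value; this drops only the index \<open>i\<close>, since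
    \<open>v\<^sub>i\<close> is not even in the hull of the other vertices.\<close>
  have "?v i \<notin> signed_cell N s i"
    using signed_cycle_vec_in_signed_cell_iff[OF N i s' i] s i by simp
  then have "?v i \<notin> insert 0 (?v ` ({1..N} - {i}))"
    unfolding signed_cell_def by (meson hull_inc)
  moreover have "vvec N lam ` {0..N} = insert 0 (insert (?v i) (?v ` ({1..N} - {i})))"
  proof -
    have "{0..N} = insert 0 (insert i ({1..N} - {i}))"
      using i by auto
    moreover have "vvec N lam ` ({1..N} - {i}) = ?v ` ({1..N} - {i})"
      by (rule image_cong) (auto simp: vvec_pos)
    ultimately show ?thesis
      using i vvec_0 vvec_pos[of i] by (simp only: image_insert) simp
  qed
  ultimately have "vvec N lam ` {0..N} - {vvec N lam i} = insert 0 (?v ` ({1..N} - {i}))"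
    using vvec_pos[of i] i by (simp only: insert_commute[of 0] Diff_insert_absorb) simp
  with T have "T = signed_cell N s i"
    by (simp add: signed_cell_def)
  with i s' show ?thesis
    by (rule that)
next
  case False
  with T obtain lam j where T: "T = convex hull ({0} \<union>
      {of_int (lam k) *\<^sub>R (ebas N (k - 1) - ebas N k) | k. 1 \<le> k \<and> k \<le> N \<and> k \<noteq> j})"
    and lam: "lam \<in> Lambda_odd j N" and j: "j \<in> {1..N}"
    by (auto simp: Delta_def)
  define s where "s k = real_of_int (lam k)" for k
  have s': "\<forall>k\<in>{1..N} - {j}. s k \<in> {-1, 1}"
  proof
    fix k
    assume "k \<in> {1..N} - {j}"
    then have "lam k \<in> {-1, 1}"
      using lam by (simp add: Lambda_odd_def)
    then show "s k \<in> {-1, 1}"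
      by (auto simp: s_def)
  qed
  have "{0} \<union> {of_int (lam k) *\<^sub>R (ebas N (k - 1) - ebas N k) | k. 1 \<le> k \<and> k \<le> N \<and> k \<noteq> j}
      = insert 0 ((\<lambda>k. s k *\<^sub>R cycle_vec N k) ` ({1..N} - {j}))"
    by (auto simp: s_def cycle_vec_def)
  with T have "T = signed_cell N s j"
    by (simp add: signed_cell_def)
  with j s' show ?thesis
    by (rule that)
qed

theorem proposition9p3:
  fixes N :: nat and T :: "vec set"
  assumes "N \<ge> 3" and "T \<in> Delta N"
  shows "primitive N T"
proof -
  obtain s i where "i \<in> {1..N}" "\<forall>k\<in>{1..N} - {i}. s k \<in> {-1, 1}" "T = signed_cell N s i"
    using Delta_cell_eq_signed_cell[OF assms] .
  with \<open>N \<ge> 3\<close> show ?thesis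
    using primitive_signed_cell by blast
qed

end
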